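(* Let $\alpha=2\sqrt7-4$. For every $\varepsilon>0$ and every balanced tetrahedral erasure channel $W$ with $Q(W)>0$, there exists an integer $m>0$ such that for all $n\ge m$, every $n$th-generation descendant $W'$ of $W$ satisfies $Q(W')\ge\alpha-\varepsilon$ (i.e. $Q(W_n)\ge\alpha-\varepsilon$ for all $n\ge m$).
   Context: $\mathrm{TEC}(p,q,r,s,t)$ denotes a tetrahedral erasure channel with parameters $p,q,r,s,t\ge0$ summing to $1$. Its entropy is $H=\frac{q+r+s}{2}+t$, its edge mass is $E=q+r+s$, and its Quetelet index is $Q=E/(H(1-H))$ (defined when $0<H<1$). It is balanced if $q=r=s$. For $W=\mathrm{TEC}(p,q,r,s,t)$, the serial child is $W^{s}=\mathrm{TEC}(p^2,\ ps+sq+qp,\ pq+qr+rp,\ pr+rs+sp,\ 1-\text{(sum of the other four)})$ and the parallel child is $W^{p}=\mathrm{TEC}(1-\text{(sum of the other four)},\ ts+sq+qt,\ tq+qr+rt,\ tr+rs+st,\ t^2)$. The $0$th-generation descendant of $W$ is $W$; the $n$th-generation descendants are the children of the $(n-1)$th-generation descendants; $W_n$ denotes a random $n$th-generation descendant. *)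

theory Defs
  imports Complex_Main
begin

type_synonym tec = "real \<times> real \<times> real \<times> real \<times> real"

definition is_tec :: "tec \<Rightarrow> bool" where
  "is_tec W = (case W of (p,q,r,s,t) \<Rightarrow>
     p \<ge> 0 \<and> q \<ge> 0 \<and> r \<ge> 0 \<and> s \<ge> 0 \<and> t \<ge> 0 \<and> p + q + r + s + t = 1)"

definition tec_H :: "tec \<Rightarrow> real" where
  "tec_H W = (case W of (p,q,r,s,t) \<Rightarrow> (q + r + s) / 2 + t)"

definition tec_E :: "tec \<Rightarrow> real" where
  "tec_E W = (case W of (p,q,r,s,t) \<Rightarrow> q + r + s)"

definition tec_Q :: "tec \<Rightarrow> real" where
  "tec_Q W = tec_E W / (tec_H W * (1 - tec_H W))"

definition balanced :: "tec \<Rightarrow> bool" where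
  "balanced W = (case W of (p,q,r,s,t) \<Rightarrow> q = r \<and> r = s)"

definition serial_child :: "tec \<Rightarrow> tec" where
  "serial_child W = (case W of (p,q,r,s,t) \<Rightarrow>
     (let p' = p^2; q' = p*s + s*q + q*p; r' = p*q + q*r + r*p; s' = p*r + r*s + s*p
      in (p', q', r', s', 1 - (p' + q' + r' + s'))))"

definition parallel_child :: "tec \<Rightarrow> tec" where
  "parallel_child W = (case W of (p,q,r,s,t) \<Rightarrow>
     (let q' = t*s + s*q + q*t; r' = t*q + q*r + r*t; s' = t*r + r*s + s*t; t' = t^2
      in (1 - (q' + r' + s' + t'), q', r', s', t')))"

fun descendants :: "nat \<Rightarrow> tec \<Rightarrow> tec set" where
  "descendants 0 W = {W}"
| "descendants (Suc n) W =
     (\<Union>V \<in> descendants n W. {serial_child V, parallel_child V})"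

end

theory Submission
  imports Defs
begin

(* Write H and Q for the entropy and the Quetelet index of a balanced channel, and note that
   alpha = 2 sqrt 7 - 4 is the positive root of a^2 + 8 a = 12.  If Q <= alpha, the serial child
   satisfies Q' >= Q + Q (alpha - Q) H / (3 alpha), and the parallel child the same bound with
   1 - H in place of H; both children preserve Q >= alpha.
   If the theorem failed, Koenig's lemma would give an infinite path of descendants all having
   Q < alpha - eps.  Along it Q increases and stays bounded, so the weights H (at serial steps)
   and 1 - H (at parallel steps) are summable and tend to 0.  But once such a weight is below
   1/6, the path must keep taking the same kind of child, and then the weight grows by a factor
   3/2 at every step. *)

definition alpha :: real where
  "alpha = 2 * sqrt 7 - 4"

lemma alpha_quadratic: "alpha^2 + 8 * alpha = 12"
  unfolding alpha_def by (simp add: algebra_simps power2_eq_square)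

lemma alpha_bounds: "0 < alpha" "alpha < 2"
proof -
  have "2 < sqrt 7" by (rule real_less_rsqrt) simp
  then show "0 < alpha" unfolding alpha_def by simp
  have "sqrt 7 < 3" by (rule real_less_lsqrt) simp_all
  then show "alpha < 2" unfolding alpha_def by simp
qed

lemma concave_quadratic_nonneg_between:
  fixes A B C s0 s s1 :: real
  assumes "A \<le> 0" "s0 \<le> s" "s \<le> s1"
    and "0 \<le> A * s0^2 + B * s0 + C" "0 \<le> A * s1^2 + B * s1 + C"
  shows "0 \<le> A * s^2 + B * s + C"
proof (cases "s0 = s1")
  case True
  then show ?thesis using assms by simp
next
  case False
  then have "s0 < s1" using assms by simp
  have "(s1 - s0) * (A * s^2 + B * s + C)
      = (s1 - s) * (A * s0^2 + B * s0 + C) + (s - s0) * (A * s1^2 + B * s1 + C)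
        + (s1 - s0) * ((s - s0) * (s1 - s)) * (- A)"
    by (simp add: algebra_simps power2_eq_square)
  also have "\<dots> \<ge> 0"
    using assms \<open>s0 < s1\<close>
    by (intro add_nonneg_nonneg; simp add: mult_nonneg_nonpos mult_nonneg_nonneg)
  finally show ?thesis using \<open>s0 < s1\<close> by (simp add: zero_le_mult_iff)
qed

lemma serial_ratio_stays_above:
  fixes a x q :: real
  assumes a: "a^2 + 8 * a = 12" "0 < a" "a < 2"
    and x: "0 < x" "x < 1" and q: "0 < q" "q \<le> 2 * x / 3"
    and above: "a * x * (1 - x) \<le> 3 * q"
  shows "a * (x^2 - 3/4 * q^2) * (1 - (x^2 - 3/4 * q^2)) \<le> 6 * q * (x - q)"
proof -
  define y where "y = 1 - x"
  define b where "b = 2 + a / 4"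
  define R where "R u = (3 * u - a * x * y) * (x * (1 + x) - b * u) + 3/2 * a * y * (1 + x) * u^2"
    for u
  have y: "0 < y" "y < 1" using x by (simp_all add: y_def)
  (* For q \<le> u0 = x (1 + x) / b both factors of the first term of R are nonnegative; beyond u0
     the quadratic R is concave, so its values at u0 and 2 x / 3 suffice. *)
  have "6 * q * (x - q) - a * (x^2 - 3/4 * q^2) * (1 - (x^2 - 3/4 * q^2))
      = R q + 9/16 * a * q^4 - (a^2 + 8 * a - 12) * x * y * q / 4"
    unfolding R_def y_def b_def by (simp add: field_simps power2_eq_square power4_eq_xxxx)
  then have key: "6 * q * (x - q) - a * (x^2 - 3/4 * q^2) * (1 - (x^2 - 3/4 * q^2))
      = R q + 9/16 * a * q^4"
    using a(1) by simp
  have "0 \<le> R q"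
  proof (cases "b * q \<le> x * (1 + x)")
    case True
    have "0 \<le> 3 * q - a * x * y" using above by (simp add: y_def)
    then show ?thesis
      unfolding R_def using True a x y by (intro add_nonneg_nonneg mult_nonneg_nonneg) auto
  next
    case False
    define A where "A = 3/2 * (a * (y * (1 + x))) - 3 * b"
    define B where "B = 3 * x * (1 + x) + a * b * x * y"
    define C where "C = - a * x^2 * y * (1 + x)"
    have R_quadratic: "R u = A * u^2 + B * u + C" for u
      unfolding R_def A_def B_def C_def by (simp add: algebra_simps power2_eq_square)
    have "y * (1 + x) \<le> 1 * 2" using x y by (intro mult_mono) auto
    then have "a * (y * (1 + x)) \<le> a * 2" using a by (intro mult_left_mono) auto
    then have "A \<le> 0" unfolding A_def b_def using a by (simp add: algebra_simps)
    have b: "0 < b" using a by (simp add: b_def)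
    define u0 where "u0 = x * (1 + x) / b"
    have "b * u0 = x * (1 + x)" using b by (simp add: u0_def)
    then have "R u0 = 3/2 * a * y * (1 + x) * u0^2" by (simp add: R_def)
    also have "\<dots> \<ge> 0" using a x y by simp
    finally have R_u0: "0 \<le> R u0" .
    have "R (2 * x / 3) = x^2 * (a / 3 * x^2 + (8 - 4 * a) / 6) + x^2 * y * (a^2 + 8 * a - 12) / 6"
      unfolding R_def y_def b_def by (simp add: field_simps power2_eq_square)
    then have R_u1: "0 \<le> R (2 * x / 3)" using a by simp
    have "u0 \<le> q" using False b by (simp add: u0_def field_simps)
    then show ?thesis
      using concave_quadratic_nonneg_between[OF \<open>A \<le> 0\<close> _ q(2), of u0 B C] R_u0 R_u1
      by (simp add: R_quadratic)
  qed
  moreover have "0 \<le> 9/16 * a * q^4" using a by simp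
  ultimately show ?thesis using key by linarith
qed

lemma serial_entropy_bounds:
  fixes x q :: real
  assumes x: "0 < x" "x < 1" and q: "0 < q" "q \<le> 2 * x / 3" "q \<le> 2 * (1 - x) / 3"
  shows "0 < x^2 - 3/4 * q^2"
    and "(1 - x) * (2 - (1 - x)) \<le> 1 - (x^2 - 3/4 * q^2)"
    and "1 - (x^2 - 3/4 * q^2) \<le> 3 * (1 - x)"
proof -
  define y where "y = 1 - x"
  have y: "0 < y" "y < 1" using x by (simp_all add: y_def)
  have "q^2 \<le> (2 * x / 3)^2" using q by (intro power_mono) auto
  then have "3/4 * q^2 \<le> x^2 / 3" by (simp add: power_divide)
  moreover have "0 < x^2" using x by simp
  ultimately show "0 < x^2 - 3/4 * q^2" by linarith
  have y'_eq: "1 - (x^2 - 3/4 * q^2) = y * (1 + x) + 3/4 * q^2"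
    by (simp add: y_def algebra_simps power2_eq_square)
  have "(1 - x) * (2 - (1 - x)) = 1 - x^2" by (simp add: algebra_simps power2_eq_square)
  then show "(1 - x) * (2 - (1 - x)) \<le> 1 - (x^2 - 3/4 * q^2)" by simp
  have "q^2 \<le> (2 * y / 3)^2" using q by (intro power_mono) (auto simp: y_def)
  then have "3/4 * q^2 \<le> y^2 / 3" by (simp add: power_divide)
  moreover have "y^2 \<le> y" using y by (simp add: power2_eq_square mult_left_le)
  moreover have "y * x \<le> y" using x y by (simp add: mult_left_le)
  ultimately have "1 - (x^2 - 3/4 * q^2) \<le> 3 * y"
    unfolding y'_eq distrib_left using y by linarith
  then show "1 - (x^2 - 3/4 * q^2) \<le> 3 * (1 - x)" by (simp add: y_def)
qed

lemma serial_ratio_gain: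
  fixes a x q :: real
  assumes a: "a^2 + 8 * a = 12" "0 < a"
    and x: "0 < x" "x < 1" and q: "0 < q" "q \<le> 2 * x / 3" "q \<le> 2 * (1 - x) / 3"
    and below: "3 * q \<le> a * x * (1 - x)"
  defines "Q \<equiv> 3 * q / (x * (1 - x))" and "x' \<equiv> x^2 - 3/4 * q^2"
  shows "Q + Q * (a - Q) * (1 - x) / (3 * a) \<le> 6 * q * (x - q) / (x' * (1 - x'))"
proof -
  define y where "y = 1 - x"
  define y' where "y' = 1 - x'"
  define v where "v = x * y"
  define D where "D = 2 * (x - q) * v - x' * y'"
  have y: "0 < y" "y < 1" using x by (simp_all add: y_def)
  have v: "0 < v" using x y by (simp add: v_def)
  note bounds = serial_entropy_bounds[OF x q]
  have "0 < x'" "y' \<le> 3 * y" using bounds(1,3) by (simp_all add: x'_def y'_def y_def)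
  have "x' \<le> x^2" by (simp add: x'_def)
  have "x^2 < 1" using x by (simp add: power_less_one_iff)
  then have "0 < y'" using \<open>x' \<le> x^2\<close> by (simp add: y'_def)
  then have "x' * y' \<le> x^2 * (3 * y)"
    using \<open>x' \<le> x^2\<close> \<open>0 < x'\<close> \<open>y' \<le> 3 * y\<close> by (intro mult_mono) auto
  then have x'y'_le: "x' * y' \<le> 3 * v * x" by (simp add: v_def power2_eq_square algebra_simps)
  have gap: "a * v - 3 * q \<ge> 0" using below by (simp add: v_def y_def)
  (* The gain Q' - Q equals 3 q D / (v x' y'). *)
  have "a * D = v * (a * v - 3 * q) + a / 4 * q * (a * v - 3 * q)
      + a * (3/2 * q^2 * (1 - x^2) + 9/16 * q^4) - q * v * (a^2 + 8 * a - 12) / 4"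
    by (simp add: D_def y'_def x'_def v_def y_def field_simps power2_eq_square power4_eq_xxxx)
  moreover have "0 \<le> a * (3/2 * q^2 * (1 - x^2) + 9/16 * q^4)"
    using a \<open>x^2 < 1\<close> by simp
  moreover have "0 \<le> a / 4 * q * (a * v - 3 * q)" using a q gap by simp
  ultimately have "v * (a * v - 3 * q) \<le> a * D" using a by simp
  then have gap_le_D: "(a * v - 3 * q) / a \<le> D / v" using a v by (simp add: field_simps)
  have Q_eq: "Q = 3 * q / v" by (simp add: Q_def v_def y_def)
  have "Q * (a - Q) * y / (3 * a) = 3 * q / (a * (3 * v * x)) * (a * v - 3 * q)"
    unfolding Q_eq using a x y by (simp add: v_def field_simps power2_eq_square)
  also have "\<dots> \<le> 3 * q / (a * (x' * y')) * (a * v - 3 * q)"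
    using a q v gap x'y'_le \<open>0 < x'\<close> \<open>0 < y'\<close>
    by (intro mult_right_mono divide_left_mono mult_left_mono mult_pos_pos) auto
  also have "\<dots> = 3 * q / (x' * y') * ((a * v - 3 * q) / a)" using a by simp
  also have "\<dots> \<le> 3 * q / (x' * y') * (D / v)"
    using gap_le_D q \<open>0 < x'\<close> \<open>0 < y'\<close> by (intro mult_left_mono) auto
  also have "\<dots> = 6 * q * (x - q) / (x' * y') - Q"
    using v \<open>0 < x'\<close> \<open>0 < y'\<close> by (simp add: Q_eq D_def field_simps)
  finally show ?thesis by (simp add: y_def y'_def)
qed

definition proper_balanced :: "tec \<Rightarrow> bool" where
  "proper_balanced V \<longleftrightarrow>
     (\<exists>p q t. V = (p, q, q, q, t) \<and> 0 \<le> p \<and> 0 < q \<and> 0 \<le> t \<and> p + 3 * q + t = 1)"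

lemma tec_H_balanced: "tec_H (p, q, q, q, t) = 3/2 * q + t"
  by (simp add: tec_H_def)

lemma serial_child_balanced:
  "serial_child (p, q, q, q, t) =
     (p^2, 2*p*q + q^2, 2*p*q + q^2, 2*p*q + q^2, 1 - p^2 - 3 * (2*p*q + q^2))"
  by (simp add: serial_child_def Let_def algebra_simps power2_eq_square)

lemma proper_balancedI:
  assumes "is_tec V" "balanced V" "0 < tec_H V" "tec_H V < 1" "0 < tec_Q V"
  shows "proper_balanced V"
proof -
  obtain p q t where V: "V = (p, q, q, q, t)"
    using assms(2) by (cases V) (auto simp: balanced_def)
  have tec: "0 \<le> p" "0 \<le> t" "p + 3 * q + t = 1" using assms(1) by (simp_all add: V is_tec_def)
  have "0 < tec_H V * (1 - tec_H V)" using assms(3,4) by simp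
  then have "0 < q" using assms(5) by (simp add: V tec_Q_def tec_E_def zero_less_divide_iff)
  then show ?thesis using tec unfolding proper_balanced_def V by blast
qed

lemma proper_balanced_is_tec: "proper_balanced V \<Longrightarrow> is_tec V"
  by (auto simp: proper_balanced_def is_tec_def)

(* In the coordinates x = p + 3 q / 2 = 1 - H and q, the serial child of TEC(p, q, q, q, t)
   has x' = x^2 - 3 q^2 / 4 and q' = 2 q (x - q). *)
lemma proper_balanced_coordinates:
  assumes "proper_balanced V"
  obtains x q where "0 < x" "x < 1" "0 < q" "q \<le> 2 * x / 3" "q \<le> 2 * (1 - x) / 3"
    and "tec_H V = 1 - x" "tec_Q V = 3 * q / (x * (1 - x))"
    and "tec_H (serial_child V) = 1 - (x^2 - 3/4 * q^2)"
    and "tec_Q (serial_child V) = 6 * q * (x - q) / ((x^2 - 3/4 * q^2) * (1 - (x^2 - 3/4 * q^2)))"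
proof -
  obtain p q t where V: "V = (p, q, q, q, t)" and pqt: "0 \<le> p" "0 < q" "0 \<le> t" "p + 3 * q + t = 1"
    using assms by (auto simp: proper_balanced_def)
  define x where "x = p + 3/2 * q"
  have H: "tec_H V = 1 - x" using pqt(4) by (simp add: V tec_H_balanced x_def)
  have Q: "tec_Q V = 3 * q / (x * (1 - x))"
    unfolding tec_Q_def H by (simp add: V tec_E_def mult.commute)
  have H': "tec_H (serial_child V) = 1 - (x^2 - 3/4 * q^2)"
    by (simp add: V serial_child_balanced tec_H_balanced x_def algebra_simps power2_eq_square)
  have Q': "tec_Q (serial_child V) = 6 * q * (x - q) / ((x^2 - 3/4 * q^2) * (1 - (x^2 - 3/4 * q^2)))"
    unfolding tec_Q_def H'
    by (simp add: V serial_child_balanced tec_E_def x_def algebra_simps power2_eq_square)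
  show thesis
    using that[OF _ _ pqt(2) _ _ H Q H' Q'] pqt by (simp add: x_def)
qed

lemma proper_balanced_bounds:
  assumes "proper_balanced V"
  shows "0 < tec_H V" "tec_H V < 1" "0 < tec_Q V"
proof -
  obtain x q where "0 < x" "x < 1" "0 < q" "tec_H V = 1 - x" "tec_Q V = 3 * q / (x * (1 - x))"
    using proper_balanced_coordinates[OF assms] by metis
  then show "0 < tec_H V" "tec_H V < 1" "0 < tec_Q V" by simp_all
qed

lemma proper_balanced_serial_child:
  assumes "proper_balanced V"
  shows "proper_balanced (serial_child V)"
proof -
  obtain p q t where V: "V = (p, q, q, q, t)" and pqt: "0 \<le> p" "0 < q" "0 \<le> t" "p + 3 * q + t = 1"
    using assms by (auto simp: proper_balanced_def)
  have "1 - p^2 - 3 * (2*p*q + q^2) = (p + 3 * q + t)^2 - p^2 - 3 * (2*p*q + q^2)"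
    using pqt(4) by simp
  also have "\<dots> = 6 * q^2 + t^2 + 2 * p * t + 6 * q * t"
    by (simp add: algebra_simps power2_eq_square)
  also have "\<dots> \<ge> 0" using pqt by simp
  finally have "0 \<le> 1 - p^2 - 3 * (2*p*q + q^2)" .
  moreover have "0 < 2*p*q + q^2" using pqt by (simp add: add_nonneg_pos)
  ultimately show ?thesis
    unfolding proper_balanced_def V serial_child_balanced by auto
qed

lemma serial_child_H_bounds:
  assumes "proper_balanced V"
  shows "tec_H V * (2 - tec_H V) \<le> tec_H (serial_child V)"
    and "tec_H (serial_child V) \<le> 3 * tec_H V"
proof -
  obtain x q where "0 < x" "x < 1" "0 < q" "q \<le> 2 * x / 3" "q \<le> 2 * (1 - x) / 3"
    and "tec_H V = 1 - x" "tec_H (serial_child V) = 1 - (x^2 - 3/4 * q^2)"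
    using proper_balanced_coordinates[OF assms] by metis
  with serial_entropy_bounds[of x q] show "tec_H V * (2 - tec_H V) \<le> tec_H (serial_child V)"
    and "tec_H (serial_child V) \<le> 3 * tec_H V" by simp_all
qed

lemma serial_child_Q_ge_alpha:
  assumes "proper_balanced V" "alpha \<le> tec_Q V"
  shows "alpha \<le> tec_Q (serial_child V)"
proof -
  obtain x q where x: "0 < x" "x < 1" and q: "0 < q" "q \<le> 2 * x / 3" "q \<le> 2 * (1 - x) / 3"
    and Q: "tec_Q V = 3 * q / (x * (1 - x))"
    and Q': "tec_Q (serial_child V) = 6 * q * (x - q) / ((x^2 - 3/4 * q^2) * (1 - (x^2 - 3/4 * q^2)))"
    using proper_balanced_coordinates[OF assms(1)] by metis
  have "alpha * x * (1 - x) \<le> 3 * q" using assms(2) x by (simp add: Q le_divide_eq mult.assoc)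
  then have "alpha * (x^2 - 3/4 * q^2) * (1 - (x^2 - 3/4 * q^2)) \<le> 6 * q * (x - q)"
    using serial_ratio_stays_above[OF alpha_quadratic alpha_bounds x q(1,2)] by simp
  moreover have "0 < (x^2 - 3/4 * q^2) * (1 - (x^2 - 3/4 * q^2))"
    using serial_entropy_bounds[OF x q] x mult_pos_pos[of "1 - x" "2 - (1 - x)"]
    by (intro mult_pos_pos) linarith+
  ultimately show ?thesis by (simp add: Q' le_divide_eq mult.assoc)
qed

lemma serial_child_Q_gain:
  assumes "proper_balanced V" "tec_Q V \<le> alpha"
  shows "tec_Q V + tec_Q V * (alpha - tec_Q V) * tec_H V / (3 * alpha) \<le> tec_Q (serial_child V)"
proof -
  obtain x q where x: "0 < x" "x < 1" and q: "0 < q" "q \<le> 2 * x / 3" "q \<le> 2 * (1 - x) / 3"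
    and H: "tec_H V = 1 - x" and Q: "tec_Q V = 3 * q / (x * (1 - x))"
    and Q': "tec_Q (serial_child V) = 6 * q * (x - q) / ((x^2 - 3/4 * q^2) * (1 - (x^2 - 3/4 * q^2)))"
    using proper_balanced_coordinates[OF assms(1)] by metis
  have "3 * q \<le> alpha * x * (1 - x)" using assms(2) x by (simp add: Q divide_le_eq mult.assoc)
  with serial_ratio_gain[OF alpha_quadratic alpha_bounds(1) x q] show ?thesis
    by (simp add: H Q Q')
qed

definition tec_mirror :: "tec \<Rightarrow> tec" where
  "tec_mirror V = (case V of (p, q, r, s, t) \<Rightarrow> (t, q, r, s, p))"

lemma parallel_child_eq_mirror: "parallel_child V = tec_mirror (serial_child (tec_mirror V))"
  by (cases V) (simp add: parallel_child_def serial_child_def tec_mirror_def Let_def)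

lemma tec_H_mirror: "is_tec V \<Longrightarrow> tec_H (tec_mirror V) = 1 - tec_H V"
  by (cases V) (auto simp: tec_mirror_def tec_H_def is_tec_def algebra_simps)

lemma tec_E_mirror: "tec_E (tec_mirror V) = tec_E V"
  by (cases V) (simp add: tec_E_def tec_mirror_def)

lemma tec_Q_mirror: "is_tec V \<Longrightarrow> tec_Q (tec_mirror V) = tec_Q V"
  by (simp add: tec_Q_def tec_H_mirror tec_E_mirror mult.commute)

lemma proper_balanced_mirror: "proper_balanced V \<Longrightarrow> proper_balanced (tec_mirror V)"
  unfolding proper_balanced_def tec_mirror_def by (auto simp: add.commute add.left_commute)

lemma proper_balanced_parallel_child:
  "proper_balanced V \<Longrightarrow> proper_balanced (parallel_child V)"
  by (simp add: parallel_child_eq_mirror proper_balanced_mirror proper_balanced_serial_child)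

lemma tec_H_parallel_child:
  "proper_balanced V \<Longrightarrow> tec_H (parallel_child V) = 1 - tec_H (serial_child (tec_mirror V))"
  by (simp add: parallel_child_eq_mirror tec_H_mirror proper_balanced_is_tec
      proper_balanced_serial_child proper_balanced_mirror)

lemma tec_Q_parallel_child:
  "proper_balanced V \<Longrightarrow> tec_Q (parallel_child V) = tec_Q (serial_child (tec_mirror V))"
  by (simp add: parallel_child_eq_mirror tec_Q_mirror proper_balanced_is_tec
      proper_balanced_serial_child proper_balanced_mirror)

lemma parallel_child_H_bounds:
  assumes "proper_balanced V"
  shows "(1 - tec_H V) * (2 - (1 - tec_H V)) \<le> 1 - tec_H (parallel_child V)"
    and "1 - tec_H (parallel_child V) \<le> 3 * (1 - tec_H V)"
  using serial_child_H_bounds[OF proper_balanced_mirror[OF assms]] assms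
  by (simp_all add: tec_H_parallel_child tec_H_mirror proper_balanced_is_tec)

lemma parallel_child_Q_ge_alpha:
  assumes "proper_balanced V" "alpha \<le> tec_Q V"
  shows "alpha \<le> tec_Q (parallel_child V)"
  using serial_child_Q_ge_alpha[OF proper_balanced_mirror[OF assms(1)]] assms
  by (simp add: tec_Q_parallel_child tec_Q_mirror proper_balanced_is_tec)

lemma parallel_child_Q_gain:
  assumes "proper_balanced V" "tec_Q V \<le> alpha"
  shows "tec_Q V + tec_Q V * (alpha - tec_Q V) * (1 - tec_H V) / (3 * alpha)
    \<le> tec_Q (parallel_child V)"
  using serial_child_Q_gain[OF proper_balanced_mirror[OF assms(1)]] assms
  by (simp add: tec_Q_parallel_child tec_Q_mirror tec_H_mirror proper_balanced_is_tec)

lemma children_Q_ge: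
  assumes "proper_balanced V" "c \<le> alpha" "c \<le> tec_Q V"
  shows "c \<le> tec_Q (serial_child V)" "c \<le> tec_Q (parallel_child V)"
proof -
  consider "alpha \<le> tec_Q V" | "tec_Q V \<le> alpha" by linarith
  then have "c \<le> tec_Q (serial_child V) \<and> c \<le> tec_Q (parallel_child V)"
  proof cases
    case 1
    then show ?thesis
      using assms serial_child_Q_ge_alpha parallel_child_Q_ge_alpha by (meson order_trans)
  next
    case 2
    have "0 \<le> tec_Q V * (alpha - tec_Q V)"
      using 2 proper_balanced_bounds[OF assms(1)] by simp
    then have "0 \<le> tec_Q V * (alpha - tec_Q V) * tec_H V / (3 * alpha)"
      and "0 \<le> tec_Q V * (alpha - tec_Q V) * (1 - tec_H V) / (3 * alpha)"
      using proper_balanced_bounds[OF assms(1)] alpha_bounds by simp_all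
    then show ?thesis
      using serial_child_Q_gain[OF assms(1) 2] parallel_child_Q_gain[OF assms(1) 2] assms(3)
      by linarith
  qed
  then show "c \<le> tec_Q (serial_child V)" "c \<le> tec_Q (parallel_child V)" by simp_all
qed

lemma descendants_Suc_children:
  "descendants (Suc n) V = descendants n (serial_child V) \<union> descendants n (parallel_child V)"
proof (induction n arbitrary: V)
  case 0
  then show ?case by auto
next
  case (Suc n)
  have "descendants (Suc (Suc n)) V
      = (\<Union>U \<in> descendants (Suc n) V. {serial_child U, parallel_child U})"
    by simp
  also have "\<dots> = (\<Union>U \<in> descendants n (serial_child V) \<union> descendants n (parallel_child V).
      {serial_child U, parallel_child U})"
    using Suc.IH by simp
  also have "\<dots> = descendants (Suc n) (serial_child V) \<union> descendants (Suc n) (parallel_child V)"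
    by auto
  finally show ?case .
qed

lemma descendants_invariant:
  assumes "\<And>V. P V \<Longrightarrow> P (serial_child V) \<and> P (parallel_child V)" "P V"
  shows "V' \<in> descendants n V \<Longrightarrow> P V'"
proof (induction n arbitrary: V')
  case 0
  then show ?case using assms(2) by simp
next
  case (Suc n)
  then obtain U where "U \<in> descendants n V" "V' = serial_child U \<or> V' = parallel_child U" by auto
  then show ?case using Suc.IH assms(1) by blast
qed

definition child_path :: "(nat \<Rightarrow> tec) \<Rightarrow> bool" where
  "child_path X \<longleftrightarrow> (\<forall>n. X (Suc n) = serial_child (X n) \<or> X (Suc n) = parallel_child (X n))"

(* Koenig's lemma for the binary tree of descendants. *)
lemma descendant_path_avoiding:
  assumes closed: "\<And>V. P V \<Longrightarrow> P (serial_child V) \<and> P (parallel_child V)"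
    and not_eventually: "\<not> (\<exists>m. \<forall>n\<ge>m. \<forall>V \<in> descendants n W. P V)"
  obtains X where "X 0 = W" "child_path X" "\<And>n. \<not> P (X n)"
proof -
  define bad where "bad V \<longleftrightarrow> (\<forall>m. \<exists>n\<ge>m. \<exists>V' \<in> descendants n V. \<not> P V')" for V
  have "bad W" using not_eventually by (auto simp: bad_def)
  have bad_child: "bad (serial_child V) \<or> bad (parallel_child V)" if "bad V" for V
  proof (rule ccontr)
    assume "\<not> (bad (serial_child V) \<or> bad (parallel_child V))"
    then obtain m1 m2
      where m1: "\<forall>n\<ge>m1. \<forall>V' \<in> descendants n (serial_child V). P V'"
        and m2: "\<forall>n\<ge>m2. \<forall>V' \<in> descendants n (parallel_child V). P V'"
      unfolding bad_def by blast
    obtain n V' where "Suc (max m1 m2) \<le> Suc n" "V' \<in> descendants (Suc n) V" "\<not> P V'"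
      using \<open>bad V\<close> unfolding bad_def by (metis Suc_le_D)
    then show False
      using m1 m2 unfolding descendants_Suc_children by auto
  qed
  have "\<exists>X. \<forall>n. (bad (X n) \<and> (n = 0 \<longrightarrow> X n = W))
      \<and> (X (Suc n) = serial_child (X n) \<or> X (Suc n) = parallel_child (X n))"
    using \<open>bad W\<close> bad_child by (intro dependent_nat_choice) blast+
  then obtain X where X: "\<And>n. bad (X n)" "X 0 = W" "child_path X"
    unfolding child_path_def by blast
  have "\<not> P (X n)" for n
    using X(1)[of n] descendants_invariant[of P, OF closed] unfolding bad_def by blast
  with X(2,3) show thesis using that by blast
qed

lemma summable_dominated_by_increments:
  fixes Q h :: "nat \<Rightarrow> real"
  assumes "\<And>n. 0 \<le> h n" "\<And>n. h n \<le> Q (Suc n) - Q n" "\<And>n. Q n \<le> B"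
  shows "summable h"
proof (rule summableI_nonneg_bounded)
  fix n
  have "(\<Sum>i<n. h i) \<le> (\<Sum>i<n. Q (Suc i) - Q i)" by (intro sum_mono assms(2))
  also have "\<dots> = Q n - Q 0" by (rule sum_lessThan_telescope)
  finally show "(\<Sum>i<n. h i) \<le> B - Q 0" using assms(3)[of n] by linarith
qed (use assms(1) in simp)

lemma logistic_gain_weights_tendsto_zero:
  fixes Q h :: "nat \<Rightarrow> real" and a c \<epsilon> :: real
  assumes "0 < c" "0 < \<epsilon>" "0 < Q 0" "\<And>n. Q n \<le> a - \<epsilon>" "\<And>n. 0 \<le> h n"
    and gain: "\<And>n. Q n + Q n * (a - Q n) * h n / c \<le> Q (Suc n)"
  shows "h \<longlonglongrightarrow> 0"
proof -
  have Q_ge: "Q 0 \<le> Q n" for n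
  proof (induction n)
    case (Suc n)
    have "0 \<le> Q n * (a - Q n) * h n / c"
      using Suc assms(1-3) assms(4,5)[of n] by simp
    then show ?case using Suc gain[of n] by linarith
  qed simp
  define k where "k = Q 0 * \<epsilon> / c"
  have "0 < k" using assms(1-3) by (simp add: k_def)
  have "k * h n \<le> Q (Suc n) - Q n" for n
  proof -
    have "Q 0 * \<epsilon> \<le> Q n * (a - Q n)"
      using Q_ge[of n] assms(2,3) assms(4)[of n] by (intro mult_mono) auto
    then have "k * h n \<le> Q n * (a - Q n) * h n / c"
      using assms(1,5) by (simp add: k_def divide_right_mono mult_right_mono)
    then show ?thesis using gain[of n] by linarith
  qed
  then have "summable (\<lambda>n. k * h n)"
    using \<open>0 < k\<close> assms(4,5)
    by (intro summable_dominated_by_increments[where Q = Q and B = "a - \<epsilon>"]) auto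
  then show ?thesis using \<open>0 < k\<close> by (simp add: summable_LIMSEQ_zero)
qed

lemma logistic_orbit_escapes:
  fixes g :: "nat \<Rightarrow> real"
  assumes "0 < g 0" "\<And>n. g n * (2 - g n) \<le> g (Suc n)"
  shows "\<exists>n. 1/6 \<le> g n"
proof (rule ccontr)
  assume "\<not> ?thesis"
  then have small: "g n < 1/6" for n by (simp add: not_le)
  have growth: "(3/2)^n * g 0 \<le> g n" for n
  proof (induction n)
    case (Suc n)
    have "0 \<le> (3/2)^n * g 0" using assms(1) by simp
    then have "0 \<le> g n" using Suc by linarith
    then have "g n * (3/2) \<le> g n * (2 - g n)" using small[of n] by (intro mult_left_mono) auto
    then show ?case using Suc assms(2)[of n] by simp
  qed simp
  obtain n where "1 / (6 * g 0) < (3/2)^n" using real_arch_pow[of "3/2 :: real"] by auto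
  then have "1/6 < (3/2)^n * g 0" using assms(1) by (simp add: field_simps)
  then show False using growth[of n] small[of n] by simp
qed

lemma eventually_small_chosen_entropy_serial:
  fixes H :: "nat \<Rightarrow> real" and serial :: "nat \<Rightarrow> bool"
  assumes pos: "\<And>n. 0 < H n"
    and step: "\<And>n. serial n \<Longrightarrow> H n * (2 - H n) \<le> H (Suc n) \<and> H (Suc n) \<le> 3 * H n"
    and small: "\<And>n. N \<le> n \<Longrightarrow> (if serial n then H n else 1 - H n) < 1/6"
    and "serial N"
  shows False
proof -
  (* A serial step from H < 1/6 leads to H < 1/2, where a parallel step is excluded. *)
  have locked: "serial (N + j)" for j
  proof (induction j)
    case (Suc j)
    have "H (N + j) < 1/6" using Suc small[of "N + j"] by simp
    then have "H (N + Suc j) < 1/2" using step[OF Suc] by simp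
    then show ?case using small[of "N + Suc j"] by (cases "serial (N + Suc j)") simp_all
  qed (simp add: \<open>serial N\<close>)
  obtain j where "1/6 \<le> H (N + j)"
    using logistic_orbit_escapes[of "\<lambda>j. H (N + j)"] pos step locked by auto
  then show False using small[of "N + j"] locked[of j] by simp
qed

lemma chosen_entropy_not_tendsto_zero:
  fixes H :: "nat \<Rightarrow> real" and serial :: "nat \<Rightarrow> bool"
  assumes H: "\<And>n. 0 < H n \<and> H n < 1"
    and serial: "\<And>n. serial n \<Longrightarrow> H n * (2 - H n) \<le> H (Suc n) \<and> H (Suc n) \<le> 3 * H n"
    and parallel: "\<And>n. \<not> serial n \<Longrightarrow>
      (1 - H n) * (2 - (1 - H n)) \<le> 1 - H (Suc n) \<and> 1 - H (Suc n) \<le> 3 * (1 - H n)"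
  shows "\<not> (\<lambda>n. if serial n then H n else 1 - H n) \<longlonglongrightarrow> 0"
proof
  assume "(\<lambda>n. if serial n then H n else 1 - H n) \<longlonglongrightarrow> 0"
  then have "\<forall>\<^sub>F n in sequentially. (if serial n then H n else 1 - H n) < 1/6"
    by (rule order_tendstoD) simp
  then obtain N where small: "\<And>n. N \<le> n \<Longrightarrow> (if serial n then H n else 1 - H n) < 1/6"
    unfolding eventually_sequentially by blast
  show False
  proof (cases "serial N")
    case True
    then show False
      using eventually_small_chosen_entropy_serial[of H serial N] H serial small by blast
  next
    case False
    show False
    proof (rule eventually_small_chosen_entropy_serial[of "\<lambda>n. 1 - H n" "\<lambda>n. \<not> serial n" N])
      show "(if \<not> serial n then 1 - H n else 1 - (1 - H n)) < 1/6" if "N \<le> n" for n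
        using small[OF that] by (cases "serial n") simp_all
    qed (use H parallel False in simp_all)
  qed
qed

lemma proper_balanced_child_path:
  assumes "proper_balanced (X 0)" "child_path X"
  shows "proper_balanced (X n)"
  using assms proper_balanced_serial_child proper_balanced_parallel_child
  by (induction n) (metis child_path_def)+

lemma child_path_Q_reaches:
  assumes "proper_balanced (X 0)" "child_path X" "0 < \<epsilon>"
  shows "\<exists>n. alpha - \<epsilon> \<le> tec_Q (X n)"
proof (rule ccontr)
  assume "\<not> ?thesis"
  then have below: "tec_Q (X n) \<le> alpha - \<epsilon>" for n by (simp add: not_le less_imp_le)
  have proper: "proper_balanced (X n)" for n
    using proper_balanced_child_path assms(1,2) by blast
  have step: "X (Suc n) = serial_child (X n) \<or> X (Suc n) = parallel_child (X n)" for n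
    using assms(2) by (simp add: child_path_def)
  define serial where "serial n \<longleftrightarrow> X (Suc n) = serial_child (X n)" for n
  define H where "H n = tec_H (X n)" for n
  define h where "h n = (if serial n then H n else 1 - H n)" for n
  have H_bounds: "0 < H n \<and> H n < 1" for n
    using proper_balanced_bounds[OF proper] by (simp add: H_def)
  have "tec_Q (X n) \<le> alpha" for n using below[of n] assms(3) by simp
  then have gain: "tec_Q (X n) + tec_Q (X n) * (alpha - tec_Q (X n)) * h n / (3 * alpha)
      \<le> tec_Q (X (Suc n))" for n
    using serial_child_Q_gain[OF proper] parallel_child_Q_gain[OF proper] step[of n]
    by (cases "serial n") (auto simp: h_def H_def serial_def)
  have "0 \<le> h n" for n using H_bounds[of n] by (simp add: h_def less_imp_le)
  then have "h \<longlonglongrightarrow> 0"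
    using alpha_bounds(1) assms(3) proper_balanced_bounds(3)[OF proper] below gain
    by (intro logistic_gain_weights_tendsto_zero[where Q = "\<lambda>n. tec_Q (X n)" and a = alpha
          and c = "3 * alpha" and \<epsilon> = \<epsilon>]) auto
  moreover have "\<not> h \<longlonglongrightarrow> 0"
    unfolding h_def
  proof (rule chosen_entropy_not_tendsto_zero)
    show "0 < H n \<and> H n < 1" for n by (rule H_bounds)
    show "H n * (2 - H n) \<le> H (Suc n) \<and> H (Suc n) \<le> 3 * H n" if "serial n" for n
      using that serial_child_H_bounds[OF proper] by (simp add: serial_def H_def)
    show "(1 - H n) * (2 - (1 - H n)) \<le> 1 - H (Suc n) \<and> 1 - H (Suc n) \<le> 3 * (1 - H n)"
      if "\<not> serial n" for n
      using that step[of n] parallel_child_H_bounds[OF proper] by (auto simp: serial_def H_def)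
  qed
  ultimately show False by contradiction
qed

theorem mainTheorem8:
  fixes \<epsilon> :: real and W :: tec
  assumes "\<epsilon> > 0"
    and "is_tec W"
    and "balanced W"
    and "0 < tec_H W" and "tec_H W < 1"
    and "tec_Q W > 0"
  shows "\<exists>m::nat. m > 0 \<and> (\<forall>n \<ge> m. \<forall>W' \<in> descendants n W.
           tec_Q W' \<ge> 2 * sqrt 7 - 4 - \<epsilon>)"
proof -
  have W: "proper_balanced W" using assms(2-6) by (rule proper_balancedI)
  define P where "P V \<longleftrightarrow> proper_balanced V \<and> alpha - \<epsilon> \<le> tec_Q V" for V
  have closed: "P V \<Longrightarrow> P (serial_child V) \<and> P (parallel_child V)" for V
    using children_Q_ge[of V "alpha - \<epsilon>"] assms(1)
    by (simp add: P_def proper_balanced_serial_child proper_balanced_parallel_child)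
  have "\<exists>m. \<forall>n\<ge>m. \<forall>V \<in> descendants n W. P V"
  proof (rule ccontr)
    assume "\<not> ?thesis"
    then obtain X where "X 0 = W" "child_path X" "\<And>n. \<not> P (X n)"
      using descendant_path_avoiding[OF closed] by metis
    then show False
      using child_path_Q_reaches[of X \<epsilon>] proper_balanced_child_path[of X] W assms(1)
      by (auto simp: P_def)
  qed
  then obtain m where "\<forall>n\<ge>Suc m. \<forall>V \<in> descendants n W. alpha - \<epsilon> \<le> tec_Q V"
    unfolding P_def by (meson Suc_leD)
  then show ?thesis unfolding alpha_def by (intro exI[of _ "Suc m"]) simp
qed

end
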